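(* For every $n\ge 0$ the Jones–Wenzl projector $\mathrm{j}_n\in\mathrm{End}_{\mathcal{TL}_0(\Bbbk)}(\mathbf n)$ is idempotent: $\mathrm{j}_n\circ\mathrm{j}_n=\mathrm{j}_n$.
   Context: $\Bbbk$ is a field. $\mathcal{TL}_0(\Bbbk)$ is the strict $\Bbbk$-linear monoidal category with objects $\mathbf 0,\mathbf 1,\dots$, $\mathbf m\otimes\mathbf n=\mathbf{m+n}$, generated by $\mathrm{cup}:\mathbf 0\to\mathbf 2$ and $\mathrm{cap}:\mathbf 2\to\mathbf 0$ subject to $(\mathrm{id}_{\mathbf 1}\otimes\mathrm{cap})\circ(\mathrm{cup}\otimes\mathrm{id}_{\mathbf 1})=0=(\mathrm{cap}\otimes\mathrm{id}_{\mathbf 1})\circ(\mathrm{id}_{\mathbf 1}\otimes\mathrm{cup})$ and $\mathrm{cap}\circ\mathrm{cup}=\mathrm{id}_{\mathbf 0}$. A subset $I\subseteq\{1,\dots,n\}$ is apt if $n\notin I$ and $i\in I$ implies $i-1,i+1\notin I$. For apt $I$, $\mathrm{cap}_{I,n}:\mathbf n\to\mathbf{n-2|I|}$ is the diagram with a cap joining strands $i$ and $i+1$ for each $i\in I$ and through-strands elsewhere, and $\mathrm{cup}_{I,n}:\mathbf{n-2|I|}\to\mathbf n$ is its reflection (cups in the same positions). Define $\mathrm{j}_n=\sum_{I\subseteq\{1,\dots,n\}\text{ apt}}(-1)^{|I|}\,\mathrm{cup}_{I,n}\circ\mathrm{cap}_{I,n}$. *)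

theory Defs
  imports Main
begin

text \<open>Formal morphism terms of the free strict monoidal category generated by the
object 1 and the morphisms cup : 0 -> 2, cap : 2 -> 0.
Objects are natural numbers, m tensor n = m + n.\<close>

datatype tm = IdT nat | CupT | CapT | CompT tm tm | TensT tm tm

text \<open>typed f m n : f is a well-formed term f : m -> n.  CompT g f means g after f;
TensT f g puts f to the left of g.\<close>

inductive typed :: "tm \<Rightarrow> nat \<Rightarrow> nat \<Rightarrow> bool" where
  t_id: "typed (IdT n) n n"
| t_cup: "typed CupT 0 2"
| t_cap: "typed CapT 2 0"
| t_comp: "typed f l m \<Longrightarrow> typed g m n \<Longrightarrow> typed (CompT g f) l n"
| t_tens: "typed f a b \<Longrightarrow> typed g c d \<Longrightarrow> typed (TensT f g) (a + c) (b + d)"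

text \<open>Formal k-linear combinations of terms are functions tm => k.\<close>

definition single :: "tm \<Rightarrow> tm \<Rightarrow> 'k::field" where
  "single t = (\<lambda>s. if s = t then 1 else 0)"

definition comp_lc :: "(tm \<Rightarrow> 'k::field) \<Rightarrow> (tm \<Rightarrow> 'k) \<Rightarrow> tm \<Rightarrow> 'k" where
  "comp_lc a b = (\<lambda>t. case t of CompT x y \<Rightarrow> a x * b y | _ \<Rightarrow> 0)"

definition tens_lc :: "(tm \<Rightarrow> 'k::field) \<Rightarrow> (tm \<Rightarrow> 'k) \<Rightarrow> tm \<Rightarrow> 'k" where
  "tens_lc a b = (\<lambda>t. case t of TensT x y \<Rightarrow> a x * b y | _ \<Rightarrow> 0)"

inductive rel_gen :: "nat \<Rightarrow> nat \<Rightarrow> tm \<Rightarrow> tm \<Rightarrow> bool" where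
  r_idl: "typed f m n \<Longrightarrow> rel_gen m n (CompT (IdT n) f) f"
| r_idr: "typed f m n \<Longrightarrow> rel_gen m n (CompT f (IdT m)) f"
| r_assoc: "typed f l m \<Longrightarrow> typed g m n \<Longrightarrow> typed h n p \<Longrightarrow>
     rel_gen l p (CompT h (CompT g f)) (CompT (CompT h g) f)"
| r_tassoc: "typed f a b \<Longrightarrow> typed g c d \<Longrightarrow> typed h e q \<Longrightarrow>
     rel_gen (a + c + e) (b + d + q) (TensT (TensT f g) h) (TensT f (TensT g h))"
| r_unitl: "typed f m n \<Longrightarrow> rel_gen m n (TensT (IdT 0) f) f"
| r_unitr: "typed f m n \<Longrightarrow> rel_gen m n (TensT f (IdT 0)) f"
| r_idtens: "rel_gen (m + n) (m + n) (TensT (IdT m) (IdT n)) (IdT (m + n))"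
| r_interchange: "typed f a b \<Longrightarrow> typed g b c \<Longrightarrow> typed f' a' b' \<Longrightarrow> typed g' b' c' \<Longrightarrow>
     rel_gen (a + a') (c + c') (TensT (CompT g f) (CompT g' f')) (CompT (TensT g g') (TensT f f'))"
| r_loop: "rel_gen 0 0 (CompT CapT CupT) (IdT 0)"

inductive rel_zero :: "nat \<Rightarrow> nat \<Rightarrow> tm \<Rightarrow> bool" where
  z_1: "rel_zero 1 1 (CompT (TensT (IdT 1) CapT) (TensT CupT (IdT 1)))"
| z_2: "rel_zero 1 1 (CompT (TensT CapT (IdT 1)) (TensT (IdT 1) CupT))"

inductive null :: "nat \<Rightarrow> nat \<Rightarrow> (tm \<Rightarrow> 'k::field) \<Rightarrow> bool" where
  n_zero: "null m n (\<lambda>_. 0)"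
| n_add: "null m n a \<Longrightarrow> null m n b \<Longrightarrow> null m n (\<lambda>t. a t + b t)"
| n_smult: "null m n a \<Longrightarrow> null m n (\<lambda>t. c * a t)"
| n_gen: "rel_gen m n s t \<Longrightarrow> null m n (\<lambda>u. single s u - single t u)"
| n_gen0: "rel_zero m n s \<Longrightarrow> null m n (single s)"
| n_compR: "null m n a \<Longrightarrow> typed f l m \<Longrightarrow> null l n (comp_lc a (single f))"
| n_compL: "null m n a \<Longrightarrow> typed g n p \<Longrightarrow> null m p (comp_lc (single g) a)"
| n_tensR: "null m n a \<Longrightarrow> typed f p q \<Longrightarrow> null (m + p) (n + q) (tens_lc a (single f))"
| n_tensL: "null m n a \<Longrightarrow> typed f p q \<Longrightarrow> null (p + m) (q + n) (tens_lc (single f) a)"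

text \<open>Equality of morphisms m -> n in TL_0(k), for linear combinations of terms m -> n.\<close>

definition tl_eq :: "nat \<Rightarrow> nat \<Rightarrow> (tm \<Rightarrow> 'k::field) \<Rightarrow> (tm \<Rightarrow> 'k) \<Rightarrow> bool" where
  "tl_eq m n a b \<longleftrightarrow> null m n (\<lambda>t. a t - b t)"

definition apt :: "nat \<Rightarrow> nat set \<Rightarrow> bool" where
  "apt n I \<longleftrightarrow> I \<subseteq> {1..n} \<and> n \<notin> I \<and> (\<forall>i\<in>I. i - 1 \<notin> I \<and> i + 1 \<notin> I)"

text \<open>capw I i k: the diagram on the k strands at positions i, ..., i+k-1, with a cap
joining strands j and j+1 for j in I and through-strands elsewhere.\<close>

fun capw :: "nat set \<Rightarrow> nat \<Rightarrow> nat \<Rightarrow> tm" where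
  "capw I i 0 = IdT 0"
| "capw I i (Suc 0) = TensT (IdT 1) (IdT 0)"
| "capw I i (Suc (Suc k)) =
     (if i \<in> I then TensT CapT (capw I (i + 2) k)
      else TensT (IdT 1) (capw I (i + 1) (Suc k)))"

fun cupw :: "nat set \<Rightarrow> nat \<Rightarrow> nat \<Rightarrow> tm" where
  "cupw I i 0 = IdT 0"
| "cupw I i (Suc 0) = TensT (IdT 1) (IdT 0)"
| "cupw I i (Suc (Suc k)) =
     (if i \<in> I then TensT CupT (cupw I (i + 2) k)
      else TensT (IdT 1) (cupw I (i + 1) (Suc k)))"

definition cap_I :: "nat set \<Rightarrow> nat \<Rightarrow> tm" where "cap_I I n = capw I 1 n"
definition cup_I :: "nat set \<Rightarrow> nat \<Rightarrow> tm" where "cup_I I n = cupw I 1 n"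

definition jw :: "nat \<Rightarrow> tm \<Rightarrow> 'k::field" where
  "jw n = (\<lambda>t. \<Sum>I\<in>{I. apt n I}. (-1) ^ card I * single (CompT (cup_I I n) (cap_I I n)) t)"

end

theory Submission
  imports Defs "HOL-Library.Function_Algebras"
begin

(* We work with windows: jw_win i k is j_k drawn on the strands i, ..., i + k - 1, and
   jw n = jw_win 1 n. Splitting the apt sets according to whether the first strand carries a cap
   gives j_(k+2) = 1 \<otimes> j_(k+1) - e \<otimes> j_k with e = cup \<circ> cap. Put A = 1 \<otimes> j_(k+1) and
   B = e \<otimes> j_k. By induction on k, A and B are idempotent (e \<circ> e = e since cap \<circ> cup = id_0),
   and A B = B A = B: expanding j_(k+1) once more, 1 \<otimes> 1 \<otimes> j_k acts as the identity on B,
   while (1 \<otimes> e \<otimes> -) \<circ> (e \<otimes> -) and its mirror image factor through a zigzag and vanish.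
   Hence (A - B)^2 = A - B. *)

section \<open>Linear combinations of typed terms\<close>

fun tm_type :: "tm \<Rightarrow> (nat \<times> nat) option" where
  "tm_type (IdT n) = Some (n, n)"
| "tm_type CupT = Some (0, 2)"
| "tm_type CapT = Some (2, 0)"
| "tm_type (CompT g f) = (case tm_type f of None \<Rightarrow> None | Some (l, m) \<Rightarrow>
     (case tm_type g of None \<Rightarrow> None | Some (m', n) \<Rightarrow> if m = m' then Some (l, n) else None))"
| "tm_type (TensT f g) = (case tm_type f of None \<Rightarrow> None | Some (a, b) \<Rightarrow>
     (case tm_type g of None \<Rightarrow> None | Some (c, d) \<Rightarrow> Some (a + c, b + d)))"

lemma typed_iff_tm_type: "typed f m n \<longleftrightarrow> tm_type f = Some (m, n)"
proof
  assume "typed f m n" then show "tm_type f = Some (m, n)" by induction auto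
next
  assume "tm_type f = Some (m, n)" then show "typed f m n"
  proof (induction f arbitrary: m n)
    case (CompT g f) then show ?case
      by (auto split: option.splits if_splits) (metis typed.t_comp)
  next
    case (TensT f g) then show ?case
      by (auto split: option.splits) (metis typed.t_tens)
  qed (auto intro: typed.intros)
qed

definition scale_lc :: "'k::field \<Rightarrow> (tm \<Rightarrow> 'k) \<Rightarrow> tm \<Rightarrow> 'k" where
  "scale_lc c a = (\<lambda>t. c * a t)"

definition lc_hom :: "nat \<Rightarrow> nat \<Rightarrow> (tm \<Rightarrow> 'k::field) \<Rightarrow> bool" where
  "lc_hom m n a \<longleftrightarrow> finite {t. a t \<noteq> 0} \<and> (\<forall>t. a t \<noteq> 0 \<longrightarrow> typed t m n)"

lemma sum_apply: "sum f S x = (\<Sum>i\<in>S. f i x)"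
  by (induction S rule: infinite_finite_induct) auto

lemma scale_lc_apply [simp]: "scale_lc c a t = c * a t"
  by (simp add: scale_lc_def)

lemma single_apply: "single s t = (if t = s then 1 else 0)"
  by (simp add: single_def)

lemma diff_eq_add_scale_lc: "a - b = a + scale_lc (-1) b"
  by (simp add: fun_eq_iff)

lemma lc_as_sum_single:
  assumes "finite S" "{t. a t \<noteq> 0} \<subseteq> S"
  shows "a = (\<Sum>s\<in>S. scale_lc (a s) (single s))"
proof
  fix t
  have "(\<Sum>s\<in>S. scale_lc (a s) (single s)) t = (\<Sum>s\<in>S. if s = t then a t else 0)"
    unfolding sum_apply by (rule sum.cong) (auto simp: single_apply)
  also have "\<dots> = a t" using assms by (auto simp: sum.delta)
  finally show "a t = (\<Sum>s\<in>S. scale_lc (a s) (single s)) t" by simp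
qed

lemma lc_hom_induct [consumes 1, case_names zero single add scale]:
  assumes "lc_hom m n a" "P 0" "\<And>s. typed s m n \<Longrightarrow> P (single s)"
    "\<And>x y. P x \<Longrightarrow> P y \<Longrightarrow> P (x + y)" "\<And>c x. P x \<Longrightarrow> P (scale_lc c x)"
  shows "P a"
proof -
  let ?S = "{t. a t \<noteq> 0}"
  have fin: "finite ?S" and typed: "\<And>t. t \<in> ?S \<Longrightarrow> typed t m n"
    using assms(1) by (auto simp: lc_hom_def)
  have "P (\<Sum>s\<in>T. scale_lc (a s) (single s))" if "T \<subseteq> ?S" for T
  proof -
    have "finite T" using fin that finite_subset by blast
    from this that show ?thesis
      by (induction T rule: finite_induct) (auto intro: assms typed)
  qed
  then have "P (\<Sum>s\<in>?S. scale_lc (a s) (single s))" by blast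
  then show ?thesis using lc_as_sum_single[OF fin, of a] by simp
qed

lemma comp_lc_add_left: "comp_lc (a + b) c = comp_lc a c + comp_lc b c"
  by (auto simp: fun_eq_iff comp_lc_def distrib_right split: tm.split)
lemma comp_lc_add_right: "comp_lc a (b + c) = comp_lc a b + comp_lc a c"
  by (auto simp: fun_eq_iff comp_lc_def distrib_left split: tm.split)
lemma comp_lc_diff_left: "comp_lc (a - b) c = comp_lc a c - comp_lc b c"
  by (auto simp: fun_eq_iff comp_lc_def left_diff_distrib split: tm.split)
lemma comp_lc_diff_right: "comp_lc a (b - c) = comp_lc a b - comp_lc a c"
  by (auto simp: fun_eq_iff comp_lc_def right_diff_distrib split: tm.split)
lemma comp_lc_scale_left: "comp_lc (scale_lc x a) b = scale_lc x (comp_lc a b)"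
  by (auto simp: fun_eq_iff comp_lc_def split: tm.split)
lemma comp_lc_scale_right: "comp_lc a (scale_lc x b) = scale_lc x (comp_lc a b)"
  by (auto simp: fun_eq_iff comp_lc_def split: tm.split)
lemma comp_lc_zero_left: "comp_lc 0 b = 0"
  by (auto simp: fun_eq_iff comp_lc_def split: tm.split)
lemma comp_lc_zero_right: "comp_lc a 0 = 0"
  by (auto simp: fun_eq_iff comp_lc_def split: tm.split)
lemma comp_lc_single: "comp_lc (single g) (single f) = (single (CompT g f) :: tm \<Rightarrow> 'k::field)"
  by (auto simp: fun_eq_iff comp_lc_def single_def split: tm.split)

lemma tens_lc_add_left: "tens_lc (a + b) c = tens_lc a c + tens_lc b c"
  by (auto simp: fun_eq_iff tens_lc_def distrib_right split: tm.split)
lemma tens_lc_add_right: "tens_lc a (b + c) = tens_lc a b + tens_lc a c"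
  by (auto simp: fun_eq_iff tens_lc_def distrib_left split: tm.split)
lemma tens_lc_diff_left: "tens_lc (a - b) c = tens_lc a c - tens_lc b c"
  by (auto simp: fun_eq_iff tens_lc_def left_diff_distrib split: tm.split)
lemma tens_lc_diff_right: "tens_lc a (b - c) = tens_lc a b - tens_lc a c"
  by (auto simp: fun_eq_iff tens_lc_def right_diff_distrib split: tm.split)
lemma tens_lc_scale_left: "tens_lc (scale_lc x a) b = scale_lc x (tens_lc a b)"
  by (auto simp: fun_eq_iff tens_lc_def split: tm.split)
lemma tens_lc_scale_right: "tens_lc a (scale_lc x b) = scale_lc x (tens_lc a b)"
  by (auto simp: fun_eq_iff tens_lc_def split: tm.split)
lemma tens_lc_zero_left: "tens_lc 0 b = 0"
  by (auto simp: fun_eq_iff tens_lc_def split: tm.split)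
lemma tens_lc_zero_right: "tens_lc a 0 = 0"
  by (auto simp: fun_eq_iff tens_lc_def split: tm.split)
lemma tens_lc_single: "tens_lc (single g) (single f) = (single (TensT g f) :: tm \<Rightarrow> 'k::field)"
  by (auto simp: fun_eq_iff tens_lc_def single_def split: tm.split)

lemma tens_lc_sum_right: "tens_lc a (sum f S) = (\<Sum>x\<in>S. tens_lc a (f x))"
proof (induction S rule: infinite_finite_induct)
  case (infinite A) then show ?case by (simp only: sum.infinite[OF infinite] tens_lc_zero_right)
next
  case empty then show ?case by (simp only: sum.empty tens_lc_zero_right)
next
  case (insert x F) then show ?case by (simp only: sum.insert[OF insert(1,2)] tens_lc_add_right)
qed

lemmas bilinear_simps = comp_lc_add_left comp_lc_add_right comp_lc_diff_left comp_lc_diff_right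
  comp_lc_scale_left comp_lc_scale_right comp_lc_zero_left comp_lc_zero_right comp_lc_single
  tens_lc_add_left tens_lc_add_right tens_lc_diff_left tens_lc_diff_right
  tens_lc_scale_left tens_lc_scale_right tens_lc_zero_left tens_lc_zero_right tens_lc_single

lemma lc_hom_zero: "lc_hom m n 0"
  by (simp add: lc_hom_def)

lemma lc_hom_single: "typed s m n \<Longrightarrow> lc_hom m n (single s)"
  by (simp add: lc_hom_def single_def)

lemma lc_hom_add:
  assumes "lc_hom m n a" "lc_hom m n b"
  shows "lc_hom m n (a + b)"
proof -
  have "{t. (a + b) t \<noteq> 0} \<subseteq> {t. a t \<noteq> 0} \<union> {t. b t \<noteq> 0}" by auto
  with assms show ?thesis
    unfolding lc_hom_def by (metis (mono_tags) finite_Un finite_subset plus_fun_apply add_0)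
qed

lemma lc_hom_scale: "lc_hom m n a \<Longrightarrow> lc_hom m n (scale_lc c a)"
  unfolding lc_hom_def by (auto elim!: rev_finite_subset)

lemma lc_hom_diff: "lc_hom m n a \<Longrightarrow> lc_hom m n b \<Longrightarrow> lc_hom m n (a - b)"
  by (simp add: diff_eq_add_scale_lc lc_hom_add lc_hom_scale)

lemma lc_hom_sum: "finite S \<Longrightarrow> (\<And>x. x \<in> S \<Longrightarrow> lc_hom m n (f x)) \<Longrightarrow> lc_hom m n (sum f S)"
  by (induction S rule: finite_induct) (auto intro: lc_hom_zero lc_hom_add)

lemma lc_hom_comp:
  assumes a: "lc_hom n p a" and b: "lc_hom m n b"
  shows "lc_hom m p (comp_lc a b)"
  using a
proof (induction rule: lc_hom_induct)
  case (single s)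
  show ?case using b
  proof (induction rule: lc_hom_induct)
    case (single s')
    then show ?case using \<open>typed s n p\<close>
      by (simp only: comp_lc_single) (blast intro: lc_hom_single typed.t_comp)
  qed (simp_all only: bilinear_simps; blast intro: lc_hom_zero lc_hom_add lc_hom_scale)+
qed (simp_all only: bilinear_simps; blast intro: lc_hom_zero lc_hom_add lc_hom_scale)+

lemma lc_hom_tens:
  assumes a: "lc_hom m n a" and b: "lc_hom p q b" and "M = m + p" "N = n + q"
  shows "lc_hom M N (tens_lc a b)"
  using a
proof (induction rule: lc_hom_induct)
  case (single s)
  show ?case using b
  proof (induction rule: lc_hom_induct)
    case (single s')
    then show ?case using \<open>typed s m n\<close> assms(3,4)
      by (simp only: tens_lc_single) (blast intro: lc_hom_single typed.t_tens)
  qed (simp_all only: bilinear_simps; blast intro: lc_hom_zero lc_hom_add lc_hom_scale)+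
qed (simp_all only: bilinear_simps; blast intro: lc_hom_zero lc_hom_add lc_hom_scale)+

section \<open>The congruence of the relations\<close>

lemma null_zero_fun: "null m n 0"
  using null.n_zero by (simp add: zero_fun_def)

lemma null_plus: "null m n a \<Longrightarrow> null m n b \<Longrightarrow> null m n (a + b)"
  using null.n_add by (simp add: plus_fun_def)

lemma null_scale: "null m n a \<Longrightarrow> null m n (scale_lc c a)"
  using null.n_smult by (simp add: scale_lc_def)

lemma null_diff: "null m n a \<Longrightarrow> null m n b \<Longrightarrow> null m n (a - b)"
  by (simp add: diff_eq_add_scale_lc null_plus null_scale)

lemma null_linear_ext:
  assumes "lc_hom m n a" "\<And>s. typed s m n \<Longrightarrow> null p q (F (single s))"
    "\<And>x y. F (x + y) = F x + F y" "\<And>c x. F (scale_lc c x) = scale_lc c (F x)" "F 0 = 0"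
  shows "null p q (F a)"
  using assms(1)
proof (induction rule: lc_hom_induct)
  case zero then show ?case by (simp only: assms(5)) (rule null_zero_fun)
next
  case (single s) then show ?case by (rule assms(2))
next
  case (add x y) then show ?case by (simp only: assms(3)) (rule null_plus)
next
  case (scale c x) then show ?case by (simp only: assms(4)) (rule null_scale)
qed

lemma null_comp_left: assumes "null m n d" "lc_hom n p g" shows "null m p (comp_lc g d)"
  by (rule null_linear_ext[OF assms(2), where F = "\<lambda>g. comp_lc g d"])
    (simp_all only: bilinear_simps null.n_compL[OF assms(1)])

lemma null_comp_right: assumes "null m n d" "lc_hom l m f" shows "null l n (comp_lc d f)"
  by (rule null_linear_ext[OF assms(2), where F = "\<lambda>f. comp_lc d f"])
    (simp_all only: bilinear_simps null.n_compR[OF assms(1)])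

lemma null_tens_left:
  assumes "null m n d" "lc_hom p q f" "M = p + m" "N = q + n"
  shows "null M N (tens_lc f d)"
  unfolding assms(3,4)
  by (rule null_linear_ext[OF assms(2), where F = "\<lambda>f. tens_lc f d"])
    (simp_all only: bilinear_simps null.n_tensL[OF assms(1)])

lemma null_tens_right:
  assumes "null m n d" "lc_hom p q f" "M = m + p" "N = n + q"
  shows "null M N (tens_lc d f)"
  unfolding assms(3,4)
  by (rule null_linear_ext[OF assms(2), where F = "\<lambda>f. tens_lc d f"])
    (simp_all only: bilinear_simps null.n_tensR[OF assms(1)])

lemma tl_eq_iff_null_diff: "tl_eq m n a b \<longleftrightarrow> null m n (a - b)"
  by (simp add: tl_eq_def fun_diff_def)

lemma tl_eq_refl: "tl_eq m n a a"
  unfolding tl_eq_iff_null_diff by (simp add: null_zero_fun)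

lemma tl_eq_sym: "tl_eq m n a b \<Longrightarrow> tl_eq m n b a"
  unfolding tl_eq_iff_null_diff
  by (drule null_scale[where c = "-1"]) (simp add: scale_lc_def fun_diff_def)

lemma tl_eq_trans [trans]: "tl_eq m n a b \<Longrightarrow> tl_eq m n b c \<Longrightarrow> tl_eq m n a c"
  unfolding tl_eq_iff_null_diff by (drule (1) null_plus) (simp add: algebra_simps)

lemma tl_eq_add: "tl_eq m n a a' \<Longrightarrow> tl_eq m n b b' \<Longrightarrow> tl_eq m n (a + b) (a' + b')"
  unfolding tl_eq_iff_null_diff by (drule (1) null_plus) (simp add: algebra_simps)

lemma tl_eq_diff: "tl_eq m n a a' \<Longrightarrow> tl_eq m n b b' \<Longrightarrow> tl_eq m n (a - b) (a' - b')"
  unfolding tl_eq_iff_null_diff by (drule (1) null_diff) (simp add: algebra_simps)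

lemma tl_eq_scale: "tl_eq m n a a' \<Longrightarrow> tl_eq m n (scale_lc c a) (scale_lc c a')"
  unfolding tl_eq_iff_null_diff
  by (drule null_scale[where c = c]) (simp add: scale_lc_def fun_diff_def right_diff_distrib)

lemma tl_eq_sum:
  "finite S \<Longrightarrow> (\<And>x. x \<in> S \<Longrightarrow> tl_eq m n (f x) (g x)) \<Longrightarrow> tl_eq m n (sum f S) (sum g S)"
  by (induction S rule: finite_induct) (auto intro: tl_eq_refl tl_eq_add)

lemma null_tl_eq_trans: "tl_eq m n a b \<Longrightarrow> null m n b \<Longrightarrow> null m n a"
  unfolding tl_eq_iff_null_diff by (drule (1) null_plus) (simp add: algebra_simps)

lemma tl_eq_zero_if_null: "null m n a \<Longrightarrow> tl_eq m n a 0"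
  unfolding tl_eq_iff_null_diff by simp

lemma tl_eq_comp_left: "tl_eq m n a b \<Longrightarrow> lc_hom n p g \<Longrightarrow> tl_eq m p (comp_lc g a) (comp_lc g b)"
  unfolding tl_eq_iff_null_diff comp_lc_diff_right[symmetric] by (rule null_comp_left)

lemma tl_eq_comp_right: "tl_eq m n a b \<Longrightarrow> lc_hom l m f \<Longrightarrow> tl_eq l n (comp_lc a f) (comp_lc b f)"
  unfolding tl_eq_iff_null_diff comp_lc_diff_left[symmetric] by (rule null_comp_right)

lemma tl_eq_tens_left: "tl_eq m n a b \<Longrightarrow> lc_hom p q f \<Longrightarrow> M = p + m \<Longrightarrow> N = q + n \<Longrightarrow>
    tl_eq M N (tens_lc f a) (tens_lc f b)"
  unfolding tl_eq_iff_null_diff tens_lc_diff_right[symmetric] by (rule null_tens_left)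

lemma tl_eq_tens_right: "tl_eq m n a b \<Longrightarrow> lc_hom p q f \<Longrightarrow> M = m + p \<Longrightarrow> N = n + q \<Longrightarrow>
    tl_eq M N (tens_lc a f) (tens_lc b f)"
  unfolding tl_eq_iff_null_diff tens_lc_diff_left[symmetric] by (rule null_tens_right)

lemma tl_eq_comp: "tl_eq m n a a' \<Longrightarrow> tl_eq l m b b' \<Longrightarrow> lc_hom m n a \<Longrightarrow> lc_hom l m b' \<Longrightarrow>
    tl_eq l n (comp_lc a b) (comp_lc a' b')"
  by (rule tl_eq_trans[OF tl_eq_comp_left tl_eq_comp_right])

lemma tl_eq_tens: "tl_eq m n a a' \<Longrightarrow> tl_eq p q b b' \<Longrightarrow> lc_hom m n a \<Longrightarrow> lc_hom p q b' \<Longrightarrow>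
    M = m + p \<Longrightarrow> N = n + q \<Longrightarrow> tl_eq M N (tens_lc a b) (tens_lc a' b')"
  by (rule tl_eq_trans[OF tl_eq_tens_left tl_eq_tens_right])

lemma tl_eq_linear_ext:
  assumes "lc_hom m n a" "\<And>s. typed s m n \<Longrightarrow> tl_eq p q (F (single s)) (G (single s))"
    "\<And>x y. F (x + y) = F x + F y" "\<And>c x. F (scale_lc c x) = scale_lc c (F x)" "F 0 = 0"
    "\<And>x y. G (x + y) = G x + G y" "\<And>c x. G (scale_lc c x) = scale_lc c (G x)" "G 0 = 0"
  shows "tl_eq p q (F a) (G a)"
  using assms(1)
proof (induction rule: lc_hom_induct)
  case zero then show ?case by (simp only: assms(5,8) tl_eq_refl)
next
  case (single s) then show ?case by (rule assms(2))
next
  case (add x y) then show ?case by (simp only: assms(3,6)) (rule tl_eq_add)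
next
  case (scale c x) then show ?case by (simp only: assms(4,7)) (rule tl_eq_scale)
qed

declare typed_iff_tm_type [simp]

abbreviation id_lc :: "nat \<Rightarrow> tm \<Rightarrow> 'k::field" where
  "id_lc n \<equiv> single (IdT n)"

abbreviation e_lc :: "tm \<Rightarrow> 'k::field" where
  "e_lc \<equiv> single (CompT CupT CapT)"

lemma tl_eq_single_if_rel_gen: "rel_gen m n s t \<Longrightarrow> tl_eq m n (single s) (single t :: tm \<Rightarrow> 'k::field)"
  using null.n_gen[of m n s t] by (simp add: tl_eq_def)

lemma tl_eq_id_left: "typed f m n \<Longrightarrow> tl_eq m n (single (CompT (IdT n) f)) (single f :: tm \<Rightarrow> 'k::field)"
  by (rule tl_eq_single_if_rel_gen) (rule r_idl)

lemma tl_eq_id_right: "typed f m n \<Longrightarrow> tl_eq m n (single (CompT f (IdT m))) (single f :: tm \<Rightarrow> 'k::field)"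
  by (rule tl_eq_single_if_rel_gen) (rule r_idr)

lemma tl_eq_assoc: "typed f l m \<Longrightarrow> typed g m n \<Longrightarrow> typed h n p \<Longrightarrow>
   tl_eq l p (single (CompT h (CompT g f))) (single (CompT (CompT h g) f) :: tm \<Rightarrow> 'k::field)"
  by (rule tl_eq_single_if_rel_gen) (rule r_assoc)

lemma tl_eq_tens_assoc: "typed f a b \<Longrightarrow> typed g c d \<Longrightarrow> typed h e q \<Longrightarrow> M = a + c + e \<Longrightarrow> N = b + d + q \<Longrightarrow>
   tl_eq M N (single (TensT (TensT f g) h)) (single (TensT f (TensT g h)) :: tm \<Rightarrow> 'k::field)"
  by (simp only:) (rule tl_eq_single_if_rel_gen, rule r_tassoc)

lemma tl_eq_id_tens_id: "M = m + n \<Longrightarrow>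
   tl_eq M M (single (TensT (IdT m) (IdT n))) (id_lc M :: tm \<Rightarrow> 'k::field)"
  by (simp only:) (rule tl_eq_single_if_rel_gen, rule r_idtens)

lemma tl_eq_interchange: "typed f a b \<Longrightarrow> typed g b c \<Longrightarrow> typed f' a' b' \<Longrightarrow> typed g' b' c' \<Longrightarrow>
   M = a + a' \<Longrightarrow> N = c + c' \<Longrightarrow> tl_eq M N (single (TensT (CompT g f) (CompT g' f')))
     (single (CompT (TensT g g') (TensT f f')) :: tm \<Rightarrow> 'k::field)"
  by (simp only:) (rule tl_eq_single_if_rel_gen, rule r_interchange)

lemma tl_eq_loop: "tl_eq 0 0 (single (CompT CapT CupT)) (id_lc 0 :: tm \<Rightarrow> 'k::field)"
  by (rule tl_eq_single_if_rel_gen) (rule r_loop)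

lemma tl_eq_unit_right: "typed f m n \<Longrightarrow> tl_eq m n (single (TensT f (IdT 0))) (single f :: tm \<Rightarrow> 'k::field)"
  by (rule tl_eq_single_if_rel_gen) (rule r_unitr)

lemma tl_eq_CompT_left: "tl_eq m n (single s) (single t :: tm \<Rightarrow> 'k::field) \<Longrightarrow> typed g n p \<Longrightarrow>
   tl_eq m p (single (CompT g s)) (single (CompT g t) :: tm \<Rightarrow> 'k)"
  by (metis tl_eq_comp_left lc_hom_single comp_lc_single)

lemma tl_eq_CompT_right: "tl_eq m n (single s) (single t :: tm \<Rightarrow> 'k::field) \<Longrightarrow> typed f l m \<Longrightarrow>
   tl_eq l n (single (CompT s f)) (single (CompT t f) :: tm \<Rightarrow> 'k)"
  by (metis tl_eq_comp_right lc_hom_single comp_lc_single)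

lemma tl_eq_TensT_left: "tl_eq m n (single s) (single t :: tm \<Rightarrow> 'k::field) \<Longrightarrow> typed f p q \<Longrightarrow>
   M = p + m \<Longrightarrow> N = q + n \<Longrightarrow> tl_eq M N (single (TensT f s)) (single (TensT f t) :: tm \<Rightarrow> 'k)"
  by (metis tl_eq_tens_left lc_hom_single tens_lc_single)

lemma tl_eq_TensT_right: "tl_eq m n (single s) (single t :: tm \<Rightarrow> 'k::field) \<Longrightarrow> typed f p q \<Longrightarrow>
   M = m + p \<Longrightarrow> N = n + q \<Longrightarrow> tl_eq M N (single (TensT s f)) (single (TensT t f) :: tm \<Rightarrow> 'k)"
  by (metis tl_eq_tens_right lc_hom_single tens_lc_single)

lemma tl_eq_CompT: "tl_eq m n (single s) (single s' :: tm \<Rightarrow> 'k::field) \<Longrightarrow>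
   tl_eq l m (single t) (single t' :: tm \<Rightarrow> 'k) \<Longrightarrow> typed s m n \<Longrightarrow> typed t' l m \<Longrightarrow>
   tl_eq l n (single (CompT s t)) (single (CompT s' t') :: tm \<Rightarrow> 'k)"
  by (rule tl_eq_trans[OF tl_eq_CompT_left tl_eq_CompT_right])

lemma tl_eq_TensT: "tl_eq m n (single s) (single s' :: tm \<Rightarrow> 'k::field) \<Longrightarrow>
   tl_eq p q (single t) (single t' :: tm \<Rightarrow> 'k) \<Longrightarrow> typed s m n \<Longrightarrow> typed t' p q \<Longrightarrow>
   M = m + p \<Longrightarrow> N = n + q \<Longrightarrow> tl_eq M N (single (TensT s t)) (single (TensT s' t') :: tm \<Rightarrow> 'k)"
  by (rule tl_eq_trans[OF tl_eq_TensT_left tl_eq_TensT_right])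

lemma null_CompT_left: "null m n (single s :: tm \<Rightarrow> 'k::field) \<Longrightarrow> typed g n p \<Longrightarrow>
   null m p (single (CompT g s) :: tm \<Rightarrow> 'k)"
  by (metis null.n_compL comp_lc_single)

lemma null_CompT_right: "null m n (single s :: tm \<Rightarrow> 'k::field) \<Longrightarrow> typed f l m \<Longrightarrow>
   null l n (single (CompT s f) :: tm \<Rightarrow> 'k)"
  by (metis null.n_compR comp_lc_single)

lemma null_TensT_right: "null m n (single s :: tm \<Rightarrow> 'k::field) \<Longrightarrow> typed f p q \<Longrightarrow>
   M = m + p \<Longrightarrow> N = n + q \<Longrightarrow> null M N (single (TensT s f) :: tm \<Rightarrow> 'k)"
  by (metis null.n_tensR tens_lc_single)

lemma tl_eq_id_left_lc:
  assumes "lc_hom m n a" shows "tl_eq m n (comp_lc (id_lc n) a) (a :: tm \<Rightarrow> 'k::field)"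
  by (rule tl_eq_linear_ext[OF assms, where F = "\<lambda>x. comp_lc (id_lc n) x" and G = "\<lambda>x. x"])
    (simp only: comp_lc_single, rule tl_eq_id_left, assumption, (simp_all only: bilinear_simps))

lemma tl_eq_id_right_lc:
  assumes "lc_hom m n a" shows "tl_eq m n (comp_lc a (id_lc m)) (a :: tm \<Rightarrow> 'k::field)"
  by (rule tl_eq_linear_ext[OF assms, where F = "\<lambda>x. comp_lc x (id_lc m)" and G = "\<lambda>x. x"])
    (simp only: comp_lc_single, rule tl_eq_id_right, assumption, (simp_all only: bilinear_simps))

lemma tl_eq_interchange_lc:
  assumes A: "lc_hom b c A" and B: "lc_hom b' c' B" and C: "lc_hom a b C" and D: "lc_hom a' b' D"
    and MN: "M = a + a'" "N = c + c'"
  shows "tl_eq M N (comp_lc (tens_lc A B) (tens_lc C D))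
    (tens_lc (comp_lc A C) (comp_lc B D) :: tm \<Rightarrow> 'k::field)"
proof -
  have h0: "tl_eq M N (comp_lc (tens_lc (single s1) (single s2)) (tens_lc (single s3) (single s4)))
      (tens_lc (comp_lc (single s1) (single s3)) (comp_lc (single s2) (single s4)) :: tm \<Rightarrow> 'k)"
    if "typed s1 b c" "typed s2 b' c'" "typed s3 a b" "typed s4 a' b'" for s1 s2 s3 s4
    unfolding bilinear_simps
    by (rule tl_eq_sym, rule tl_eq_interchange[OF that(3) that(1) that(4) that(2) MN])
  have h1: "tl_eq M N (comp_lc (tens_lc (single s1) (single s2)) (tens_lc (single s3) D))
      (tens_lc (comp_lc (single s1) (single s3)) (comp_lc (single s2) D) :: tm \<Rightarrow> 'k)"
    if "typed s1 b c" "typed s2 b' c'" "typed s3 a b" for s1 s2 s3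
    by (rule tl_eq_linear_ext[OF D])
      (rule h0[OF that], assumption, (simp_all only: bilinear_simps))
  have h2: "tl_eq M N (comp_lc (tens_lc (single s1) (single s2)) (tens_lc C D))
      (tens_lc (comp_lc (single s1) C) (comp_lc (single s2) D) :: tm \<Rightarrow> 'k)"
    if "typed s1 b c" "typed s2 b' c'" for s1 s2
    by (rule tl_eq_linear_ext[OF C, where F = "\<lambda>x. comp_lc (tens_lc (single s1) (single s2)) (tens_lc x D)"
          and G = "\<lambda>x. tens_lc (comp_lc (single s1) x) (comp_lc (single s2) D)"])
      (rule h1[OF that], assumption, (simp_all only: bilinear_simps))
  have h3: "tl_eq M N (comp_lc (tens_lc (single s1) B) (tens_lc C D))
      (tens_lc (comp_lc (single s1) C) (comp_lc B D) :: tm \<Rightarrow> 'k)"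
    if "typed s1 b c" for s1
    by (rule tl_eq_linear_ext[OF B, where F = "\<lambda>x. comp_lc (tens_lc (single s1) x) (tens_lc C D)"
          and G = "\<lambda>x. tens_lc (comp_lc (single s1) C) (comp_lc x D)"])
      (rule h2[OF that], assumption, (simp_all only: bilinear_simps))
  show ?thesis
    by (rule tl_eq_linear_ext[OF A, where F = "\<lambda>x. comp_lc (tens_lc x B) (tens_lc C D)"
          and G = "\<lambda>x. tens_lc (comp_lc x C) (comp_lc B D)"])
      (rule h3, assumption, (simp_all only: bilinear_simps))
qed

lemma tl_eq_id_tens_id_tens:
  assumes X: "lc_hom m n X" and MN: "M = 2 + m" "N = 2 + n"
  shows "tl_eq M N (tens_lc (id_lc 1) (tens_lc (id_lc 1) X)) (tens_lc (id_lc 2) X :: tm \<Rightarrow> 'k::field)"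
proof (rule tl_eq_linear_ext[OF X, where F = "\<lambda>x. tens_lc (id_lc 1) (tens_lc (id_lc 1) x)"])
  fix s assume s: "typed s m n"
  have "tl_eq M N (single (TensT (IdT 1) (TensT (IdT 1) s)))
      (single (TensT (TensT (IdT 1) (IdT 1)) s) :: tm \<Rightarrow> 'k)"
    by (rule tl_eq_sym, rule tl_eq_tens_assoc[where a=1 and b=1 and c=1 and d=1 and e=m and q=n])
      (use s MN in auto)
  also have "tl_eq M N \<dots> (single (TensT (IdT 2) s))"
    by (rule tl_eq_TensT_right[where m=2 and n=2 and p=m and q=n], rule tl_eq_id_tens_id) (use s MN in auto)
  finally show "tl_eq M N (tens_lc (id_lc 1) (tens_lc (id_lc 1) (single s)))
      (tens_lc (id_lc 2) (single s) :: tm \<Rightarrow> 'k)"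
    unfolding tens_lc_single .
qed (simp_all only: bilinear_simps)

lemma lc_hom_id_lc: "lc_hom n n (id_lc n :: tm \<Rightarrow> 'k::field)"
  by (rule lc_hom_single) simp

lemma lc_hom_e_lc: "lc_hom 2 2 (e_lc :: tm \<Rightarrow> 'k::field)"
  by (rule lc_hom_single) simp

lemma id_lc_comp_id_lc: "tl_eq n n (comp_lc (id_lc n) (id_lc n)) (id_lc n :: tm \<Rightarrow> 'k::field)"
  unfolding comp_lc_single by (rule tl_eq_id_left) simp

lemma e_lc_comp_e_lc: "tl_eq 2 2 (comp_lc e_lc e_lc) (e_lc :: tm \<Rightarrow> 'k::field)"
proof -
  have "tl_eq 2 0 (single (CompT CapT (CompT CupT CapT))) (single (CompT (CompT CapT CupT) CapT) :: tm \<Rightarrow> 'k)"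
    by (rule tl_eq_assoc[where m=0 and n=2]) auto
  also have "tl_eq 2 0 \<dots> (single (CompT (IdT 0) CapT))"
    by (rule tl_eq_CompT_right, rule tl_eq_loop) auto
  also have "tl_eq 2 0 \<dots> (single CapT)"
    by (rule tl_eq_id_left) auto
  finally have cap_e: "tl_eq 2 0 (single (CompT CapT (CompT CupT CapT))) (single CapT :: tm \<Rightarrow> 'k)" .
  have "tl_eq 2 2 (single (CompT (CompT CupT CapT) (CompT CupT CapT)))
     (single (CompT CupT (CompT CapT (CompT CupT CapT))) :: tm \<Rightarrow> 'k)"
    by (rule tl_eq_sym, rule tl_eq_assoc[where m=2 and n=0]) auto
  also have "tl_eq 2 2 \<dots> e_lc"
    by (rule tl_eq_CompT_left[OF cap_e]) auto
  finally show ?thesis unfolding comp_lc_single .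
qed

lemma id_tens_id_tens_comp_e_tens:
  assumes x: "lc_hom k k x" and y: "lc_hom k k y"
  shows "tl_eq (Suc (Suc k)) (Suc (Suc k))
    (comp_lc (tens_lc (id_lc 1) (tens_lc (id_lc 1) x)) (tens_lc e_lc y)) (tens_lc e_lc (comp_lc x y) :: tm \<Rightarrow> 'k::field)"
proof -
  let ?K = "Suc (Suc k)"
  have "tl_eq ?K ?K (comp_lc (tens_lc (id_lc 1) (tens_lc (id_lc 1) x)) (tens_lc e_lc y))
      (comp_lc (tens_lc (id_lc 2) x) (tens_lc e_lc y))"
    by (rule tl_eq_comp_right[OF tl_eq_id_tens_id_tens[OF x] lc_hom_tens[OF lc_hom_e_lc y]]) simp_all
  also have "tl_eq ?K ?K \<dots> (tens_lc (comp_lc (id_lc 2) e_lc) (comp_lc x y))"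
    by (rule tl_eq_interchange_lc[OF lc_hom_id_lc x lc_hom_e_lc y]) simp_all
  also have "tl_eq ?K ?K \<dots> (tens_lc e_lc (comp_lc x y))"
    by (rule tl_eq_tens_right[OF _ lc_hom_comp[OF x y]], unfold comp_lc_single, rule tl_eq_id_left) simp_all
  finally show ?thesis .
qed

lemma e_tens_comp_id_tens_id_tens:
  assumes x: "lc_hom k k x" and y: "lc_hom k k y"
  shows "tl_eq (Suc (Suc k)) (Suc (Suc k))
    (comp_lc (tens_lc e_lc y) (tens_lc (id_lc 1) (tens_lc (id_lc 1) x))) (tens_lc e_lc (comp_lc y x) :: tm \<Rightarrow> 'k::field)"
proof -
  let ?K = "Suc (Suc k)"
  have "tl_eq ?K ?K (comp_lc (tens_lc e_lc y) (tens_lc (id_lc 1) (tens_lc (id_lc 1) x)))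
      (comp_lc (tens_lc e_lc y) (tens_lc (id_lc 2) x))"
    by (rule tl_eq_comp_left[OF tl_eq_id_tens_id_tens[OF x] lc_hom_tens[OF lc_hom_e_lc y]]) simp_all
  also have "tl_eq ?K ?K \<dots> (tens_lc (comp_lc e_lc (id_lc 2)) (comp_lc y x))"
    by (rule tl_eq_interchange_lc[OF lc_hom_e_lc y lc_hom_id_lc x]) simp_all
  also have "tl_eq ?K ?K \<dots> (tens_lc e_lc (comp_lc y x))"
    by (rule tl_eq_tens_right[OF _ lc_hom_comp[OF y x]], unfold comp_lc_single, rule tl_eq_id_right) simp_all
  finally show ?thesis .
qed

section \<open>Consequences of the zigzag relations\<close>

lemma id_tens_e_factor: "tl_eq 3 3 (single (TensT (IdT 1) (CompT CupT CapT)))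
   (single (CompT (TensT (IdT 1) CupT) (TensT (IdT 1) CapT)) :: tm \<Rightarrow> 'k::field)"
proof -
  have "tl_eq 3 3 (single (TensT (IdT 1) (CompT CupT CapT)))
      (single (TensT (CompT (IdT 1) (IdT 1)) (CompT CupT CapT)) :: tm \<Rightarrow> 'k)"
    by (rule tl_eq_TensT_right, rule tl_eq_sym, rule tl_eq_id_left) auto
  also have "tl_eq 3 3 \<dots> (single (CompT (TensT (IdT 1) CupT) (TensT (IdT 1) CapT)))"
    by (rule tl_eq_interchange) auto
  finally show ?thesis .
qed

lemma id_tens_e_tens_factor_late:
  assumes "typed A a a'"
  shows "tl_eq (3 + a) (3 + a') (single (TensT (IdT 1) (TensT (CompT CupT CapT) A)))
    (single (CompT (TensT (TensT (IdT 1) CupT) A) (TensT (TensT (IdT 1) CapT) (IdT a))) :: tm \<Rightarrow> 'k::field)"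
proof -
  have "tl_eq (3 + a) (3 + a') (single (TensT (IdT 1) (TensT (CompT CupT CapT) A)))
      (single (TensT (TensT (IdT 1) (CompT CupT CapT)) A) :: tm \<Rightarrow> 'k)"
    by (rule tl_eq_sym, rule tl_eq_tens_assoc) (use assms in auto)
  also have "tl_eq (3 + a) (3 + a') \<dots>
      (single (TensT (CompT (TensT (IdT 1) CupT) (TensT (IdT 1) CapT)) (CompT A (IdT a))))"
    by (rule tl_eq_TensT, rule id_tens_e_factor, rule tl_eq_sym, rule tl_eq_id_right) (use assms in auto)
  also have "tl_eq (3 + a) (3 + a') \<dots>
      (single (CompT (TensT (TensT (IdT 1) CupT) A) (TensT (TensT (IdT 1) CapT) (IdT a))))"
    by (rule tl_eq_interchange) (use assms in auto)
  finally show ?thesis .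
qed

lemma id_tens_e_tens_factor_early:
  assumes "typed A a a'"
  shows "tl_eq (3 + a) (3 + a') (single (TensT (IdT 1) (TensT (CompT CupT CapT) A)))
    (single (CompT (TensT (TensT (IdT 1) CupT) (IdT a')) (TensT (TensT (IdT 1) CapT) A)) :: tm \<Rightarrow> 'k::field)"
proof -
  have "tl_eq (3 + a) (3 + a') (single (TensT (IdT 1) (TensT (CompT CupT CapT) A)))
      (single (TensT (TensT (IdT 1) (CompT CupT CapT)) A) :: tm \<Rightarrow> 'k)"
    by (rule tl_eq_sym, rule tl_eq_tens_assoc) (use assms in auto)
  also have "tl_eq (3 + a) (3 + a') \<dots>
      (single (TensT (CompT (TensT (IdT 1) CupT) (TensT (IdT 1) CapT)) (CompT (IdT a') A)))"
    by (rule tl_eq_TensT, rule id_tens_e_factor, rule tl_eq_sym, rule tl_eq_id_left) (use assms in auto)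
  also have "tl_eq (3 + a) (3 + a') \<dots>
      (single (CompT (TensT (TensT (IdT 1) CupT) (IdT a')) (TensT (TensT (IdT 1) CapT) A)))"
    by (rule tl_eq_interchange[where a=3 and b=1 and c=3]) (use assms in auto)
  finally show ?thesis .
qed

lemma tl_eq_cup_tens_id_Suc: "tl_eq (Suc a) (3 + a) (single (TensT CupT (IdT (Suc a))))
    (single (TensT (TensT CupT (IdT 1)) (IdT a)) :: tm \<Rightarrow> 'k::field)"
proof -
  have "tl_eq (Suc a + 0) (Suc a + 2) (single (TensT CupT (IdT (Suc a))))
      (single (TensT CupT (TensT (IdT 1) (IdT a))) :: tm \<Rightarrow> 'k)"
    by (rule tl_eq_TensT_left, rule tl_eq_sym, rule tl_eq_id_tens_id) auto
  also have "tl_eq (Suc a + 0) (Suc a + 2) \<dots> (single (TensT (TensT CupT (IdT 1)) (IdT a)))"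
    by (rule tl_eq_sym, rule tl_eq_tens_assoc) auto
  finally show ?thesis by (simp add: eval_nat_numeral)
qed

lemma tl_eq_cap_tens_id_Suc: "tl_eq (3 + a) (Suc a) (single (TensT CapT (IdT (Suc a))))
    (single (TensT (TensT CapT (IdT 1)) (IdT a)) :: tm \<Rightarrow> 'k::field)"
proof -
  have "tl_eq (2 + Suc a) (0 + Suc a) (single (TensT CapT (IdT (Suc a))))
      (single (TensT CapT (TensT (IdT 1) (IdT a))) :: tm \<Rightarrow> 'k)"
    by (rule tl_eq_TensT_left, rule tl_eq_sym, rule tl_eq_id_tens_id) auto
  also have "tl_eq (2 + Suc a) (0 + Suc a) \<dots> (single (TensT (TensT CapT (IdT 1)) (IdT a)))"
    by (rule tl_eq_sym, rule tl_eq_tens_assoc) auto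
  finally show ?thesis by (simp add: eval_nat_numeral)
qed

lemma e_tens_factor_early:
  assumes "typed B b (Suc a)"
  shows "tl_eq (2 + b) (3 + a) (single (TensT (CompT CupT CapT) B))
    (single (CompT (TensT (TensT CupT (IdT 1)) (IdT a)) (TensT CapT B)) :: tm \<Rightarrow> 'k::field)"
proof -
  have "tl_eq (2 + b) (3 + a) (single (TensT (CompT CupT CapT) B))
      (single (TensT (CompT CupT CapT) (CompT (IdT (Suc a)) B)) :: tm \<Rightarrow> 'k)"
    by (rule tl_eq_TensT_left, rule tl_eq_sym, rule tl_eq_id_left) (use assms in auto)
  also have "tl_eq (2 + b) (3 + a) \<dots> (single (CompT (TensT CupT (IdT (Suc a))) (TensT CapT B)))"
    by (rule tl_eq_interchange[where a=2 and b=0 and c=2]) (use assms in auto)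
  also have "tl_eq (2 + b) (3 + a) \<dots> (single (CompT (TensT (TensT CupT (IdT 1)) (IdT a)) (TensT CapT B)))"
    by (rule tl_eq_CompT_right[OF tl_eq_cup_tens_id_Suc]) (use assms in auto)
  finally show ?thesis .
qed

lemma e_tens_factor_late:
  assumes "typed B (Suc a) b"
  shows "tl_eq (3 + a) (2 + b) (single (TensT (CompT CupT CapT) B))
    (single (CompT (TensT CupT B) (TensT (TensT CapT (IdT 1)) (IdT a))) :: tm \<Rightarrow> 'k::field)"
proof -
  have "tl_eq (3 + a) (2 + b) (single (TensT (CompT CupT CapT) B))
      (single (TensT (CompT CupT CapT) (CompT B (IdT (Suc a)))) :: tm \<Rightarrow> 'k)"
    by (rule tl_eq_TensT_left, rule tl_eq_sym, rule tl_eq_id_right) (use assms in auto)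
  also have "tl_eq (3 + a) (2 + b) \<dots> (single (CompT (TensT CupT B) (TensT CapT (IdT (Suc a)))))"
    by (rule tl_eq_interchange[where a=2 and b=0 and c=2]) (use assms in auto)
  also have "tl_eq (3 + a) (2 + b) \<dots> (single (CompT (TensT CupT B) (TensT (TensT CapT (IdT 1)) (IdT a))))"
    by (rule tl_eq_CompT_left[OF tl_eq_cap_tens_id_Suc]) (use assms in auto)
  finally show ?thesis .
qed

lemma null_CompT_tens_id:
  assumes "null m n (single (CompT f g) :: tm \<Rightarrow> 'k::field)" "typed g m l" "typed f l n"
  shows "null (m + a) (n + a) (single (CompT (TensT f (IdT a)) (TensT g (IdT a))) :: tm \<Rightarrow> 'k)"
proof (rule null_tl_eq_trans)
  show "tl_eq (m + a) (n + a) (single (CompT (TensT f (IdT a)) (TensT g (IdT a))))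
      (single (TensT (CompT f g) (CompT (IdT a) (IdT a))) :: tm \<Rightarrow> 'k)"
    by (rule tl_eq_sym, rule tl_eq_interchange) (use assms in auto)
  show "null (m + a) (n + a) (single (TensT (CompT f g) (CompT (IdT a) (IdT a))) :: tm \<Rightarrow> 'k)"
    by (rule null_TensT_right[OF assms(1)]) auto
qed

lemma null_CompT_if_middle_null:
  assumes s: "tl_eq l n (single s) (single (CompT T2 T1) :: tm \<Rightarrow> 'k::field)"
    and t: "tl_eq k l (single t) (single (CompT B1 B0) :: tm \<Rightarrow> 'k)"
    and middle: "null m m' (single (CompT T1 B1) :: tm \<Rightarrow> 'k)"
    and "typed s l n" "typed T2 m' n" "typed T1 l m'" "typed B1 m l" "typed B0 k m"
  shows "null k n (single (CompT s t) :: tm \<Rightarrow> 'k)"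
proof (rule null_tl_eq_trans)
  have "tl_eq k n (single (CompT s t)) (single (CompT (CompT T2 T1) (CompT B1 B0)) :: tm \<Rightarrow> 'k)"
    by (rule tl_eq_CompT[OF s t]) (use assms in auto)
  also have "tl_eq k n \<dots> (single (CompT T2 (CompT T1 (CompT B1 B0))))"
    by (rule tl_eq_sym, rule tl_eq_assoc) (use assms in auto)
  also have "tl_eq k n \<dots> (single (CompT T2 (CompT (CompT T1 B1) B0)))"
    by (rule tl_eq_CompT_left, rule tl_eq_assoc) (use assms in auto)
  finally show "tl_eq k n (single (CompT s t)) (single (CompT T2 (CompT (CompT T1 B1) B0)) :: tm \<Rightarrow> 'k)" .
  show "null k n (single (CompT T2 (CompT (CompT T1 B1) B0)) :: tm \<Rightarrow> 'k)"
    by (rule null_CompT_left[OF null_CompT_right[OF middle]]) (use assms in auto)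
qed

lemma null_id_e_comp_e:
  assumes "typed A a a'" "typed B b (Suc a)"
  shows "null (2 + b) (3 + a') (single (CompT (TensT (IdT 1) (TensT (CompT CupT CapT) A))
    (TensT (CompT CupT CapT) B)) :: tm \<Rightarrow> 'k::field)"
  by (rule null_CompT_if_middle_null[OF id_tens_e_tens_factor_late[OF assms(1)]
        e_tens_factor_early[OF assms(2)] null_CompT_tens_id[OF null.n_gen0[OF z_1]]])
    (use assms in auto)

lemma null_e_comp_id_e:
  assumes "typed A a a'" "typed B (Suc a') b"
  shows "null (3 + a) (2 + b) (single (CompT (TensT (CompT CupT CapT) B)
    (TensT (IdT 1) (TensT (CompT CupT CapT) A))) :: tm \<Rightarrow> 'k::field)"
  by (rule null_CompT_if_middle_null[OF e_tens_factor_late[OF assms(2)]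
        id_tens_e_tens_factor_early[OF assms(1)] null_CompT_tens_id[OF null.n_gen0[OF z_2]]])
    (use assms in auto)


lemma null_id_e_comp_e_lc:
  assumes X: "lc_hom a a' X" and Y: "lc_hom b (Suc a) Y" and MN: "M = 2 + b" "N = 3 + a'"
  shows "null M N (comp_lc (tens_lc (id_lc 1) (tens_lc e_lc X)) (tens_lc e_lc Y) :: tm \<Rightarrow> 'k::field)"
proof -
  have "null M N (comp_lc (tens_lc (id_lc 1) (tens_lc e_lc (single s))) (tens_lc e_lc Y) :: tm \<Rightarrow> 'k)"
    if s: "typed s a a'" for s
    by (rule null_linear_ext[OF Y])
      (unfold bilinear_simps MN, rule null_id_e_comp_e[OF s], assumption, simp_all only: bilinear_simps)
  then show ?thesis
    by (rule null_linear_ext[OF X, where F = "\<lambda>x. comp_lc (tens_lc (id_lc 1) (tens_lc e_lc x)) (tens_lc e_lc Y)"])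
      (simp_all only: bilinear_simps)
qed

lemma null_e_comp_id_e_lc:
  assumes X: "lc_hom a a' X" and Y: "lc_hom (Suc a') b Y" and MN: "M = 3 + a" "N = 2 + b"
  shows "null M N (comp_lc (tens_lc e_lc Y) (tens_lc (id_lc 1) (tens_lc e_lc X)) :: tm \<Rightarrow> 'k::field)"
proof -
  have "null M N (comp_lc (tens_lc e_lc Y) (tens_lc (id_lc 1) (tens_lc e_lc (single s))) :: tm \<Rightarrow> 'k)"
    if s: "typed s a a'" for s
    by (rule null_linear_ext[OF Y, where F = "\<lambda>y. comp_lc (tens_lc e_lc y) (tens_lc (id_lc 1) (tens_lc e_lc (single s)))"])
      (unfold bilinear_simps MN, rule null_e_comp_id_e[OF s], assumption, simp_all only: bilinear_simps)
  then show ?thesis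
    by (rule null_linear_ext[OF X, where F = "\<lambda>x. comp_lc (tens_lc e_lc Y) (tens_lc (id_lc 1) (tens_lc e_lc x))"])
      (simp_all only: bilinear_simps)
qed

section \<open>Projectors on windows of strands\<close>

fun capw_cod :: "nat set \<Rightarrow> nat \<Rightarrow> nat \<Rightarrow> nat" where
  "capw_cod I i 0 = 0"
| "capw_cod I i (Suc 0) = 1"
| "capw_cod I i (Suc (Suc k)) = (if i \<in> I then capw_cod I (i + 2) k else Suc (capw_cod I (i + 1) (Suc k)))"

lemma tm_type_capw_cupw:
  "tm_type (capw I i k) = Some (k, capw_cod I i k) \<and> tm_type (cupw I i k) = Some (capw_cod I i k, k)"
  by (induction I i k rule: capw.induct) auto

lemma capw_cong: "(\<And>x. x \<ge> i \<Longrightarrow> x \<in> I \<longleftrightarrow> x \<in> I') \<Longrightarrow> capw I i k = capw I' i k"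
  by (induction I i k rule: capw.induct) auto

lemma cupw_cong: "(\<And>x. x \<ge> i \<Longrightarrow> x \<in> I \<longleftrightarrow> x \<in> I') \<Longrightarrow> cupw I i k = cupw I' i k"
  by (induction I i k rule: cupw.induct) auto

definition apt_win :: "nat \<Rightarrow> nat \<Rightarrow> nat set set" where
  "apt_win i k = {I. I \<subseteq> {i..<i + k - 1} \<and> (\<forall>j\<in>I. Suc j \<notin> I)}"

lemma finite_apt_win: "finite (apt_win i k)"
proof -
  have "apt_win i k \<subseteq> Pow {i..<i + k - 1}" by (auto simp: apt_win_def)
  then show ?thesis by (rule finite_subset) simp
qed

lemma apt_win_0: "apt_win i 0 = {{}}"
  by (auto simp: apt_win_def)

lemma apt_win_1: "apt_win i (Suc 0) = {{}}"
  by (auto simp: apt_win_def)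

lemma apt_win_Suc_Suc:
  "apt_win i (Suc (Suc k)) = apt_win (Suc i) (Suc k) \<union> insert i ` apt_win (Suc (Suc i)) k"
proof (intro set_eqI iffI)
  fix I assume I: "I \<in> apt_win i (Suc (Suc k))"
  show "I \<in> apt_win (Suc i) (Suc k) \<union> insert i ` apt_win (Suc (Suc i)) k"
  proof (cases "i \<in> I")
    case True
    with I have "I - {i} \<in> apt_win (Suc (Suc i)) k"
      by (auto simp: apt_win_def subset_iff) (metis Suc_leI le_neq_implies_less)
    moreover have "I = insert i (I - {i})" using True by auto
    ultimately show ?thesis by blast
  next
    case False
    with I have "I \<in> apt_win (Suc i) (Suc k)"
      by (auto simp: apt_win_def subset_iff) (metis le_neq_implies_less Suc_leI)
    then show ?thesis by blast
  qed
qed (auto simp: apt_win_def subset_iff)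

definition jw_win :: "nat \<Rightarrow> nat \<Rightarrow> tm \<Rightarrow> 'k::field" where
  "jw_win i k = (\<Sum>I\<in>apt_win i k. scale_lc ((-1) ^ card I) (single (CompT (cupw I i k) (capw I i k))))"

lemma lc_hom_jw_win: "lc_hom k k (jw_win i k)"
  unfolding jw_win_def
  by (rule lc_hom_sum[OF finite_apt_win], rule lc_hom_scale, rule lc_hom_single) (simp add: tm_type_capw_cupw)

lemma jw_win_0: "jw_win i 0 = single (CompT (IdT 0) (IdT 0))"
  by (simp add: jw_win_def apt_win_0 fun_eq_iff)

lemma jw_win_1: "jw_win i (Suc 0) = single (CompT (TensT (IdT 1) (IdT 0)) (TensT (IdT 1) (IdT 0)))"
  by (simp add: jw_win_def apt_win_1 fun_eq_iff)

lemma jw_win_Suc_Suc: "jw_win i (Suc (Suc k)) =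
   (\<Sum>I\<in>apt_win (Suc i) (Suc k). scale_lc ((-1) ^ card I)
      (single (CompT (TensT (IdT 1) (cupw I (Suc i) (Suc k))) (TensT (IdT 1) (capw I (Suc i) (Suc k))))))
 - (\<Sum>J\<in>apt_win (Suc (Suc i)) k. scale_lc ((-1) ^ card J)
      (single (CompT (TensT CupT (cupw J (Suc (Suc i)) k)) (TensT CapT (capw J (Suc (Suc i)) k)))))"
  (is "_ = ?S1 - ?S2")
proof -
  let ?F = "\<lambda>I. scale_lc ((-1) ^ card I)
    (single (CompT (cupw I i (Suc (Suc k))) (capw I i (Suc (Suc k))))) :: tm \<Rightarrow> 'a"
  have disjoint: "apt_win (Suc i) (Suc k) \<inter> insert i ` apt_win (Suc (Suc i)) k = {}"
    by (auto simp: apt_win_def)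
  have inj: "inj_on (insert i) (apt_win (Suc (Suc i)) k)"
  proof (rule inj_onI)
    fix I J assume "I \<in> apt_win (Suc (Suc i)) k" "J \<in> apt_win (Suc (Suc i)) k" "insert i I = insert i J"
    moreover from this have "i \<notin> I" "i \<notin> J" by (auto simp: apt_win_def)
    ultimately show "I = J" by (metis Diff_insert_absorb)
  qed
  have "jw_win i (Suc (Suc k)) =
      sum ?F (apt_win (Suc i) (Suc k)) + sum (?F \<circ> insert i) (apt_win (Suc (Suc i)) k)"
    unfolding jw_win_def apt_win_Suc_Suc
    by (simp only: sum.union_disjoint[OF finite_apt_win finite_imageI[OF finite_apt_win] disjoint]
        sum.reindex[OF inj])
  also have "sum ?F (apt_win (Suc i) (Suc k)) = ?S1"
    by (rule sum.cong) (auto simp: apt_win_def)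
  also have "sum (?F \<circ> insert i) (apt_win (Suc (Suc i)) k) = - ?S2"
    unfolding sum_negf[symmetric]
  proof (rule sum.cong)
    fix J assume J: "J \<in> apt_win (Suc (Suc i)) k"
    then have "i \<notin> J" "finite J" by (auto simp: apt_win_def intro: finite_subset)
    moreover have "capw (insert i J) (Suc (Suc i)) k = capw J (Suc (Suc i)) k"
      "cupw (insert i J) (Suc (Suc i)) k = cupw J (Suc (Suc i)) k"
      by (auto intro: capw_cong cupw_cong)
    ultimately show "(?F \<circ> insert i) J = - scale_lc ((-1) ^ card J)
      (single (CompT (TensT CupT (cupw J (Suc (Suc i)) k)) (TensT CapT (capw J (Suc (Suc i)) k))))"
      by (simp add: numeral_2_eq_2 fun_eq_iff)
  qed simp
  finally show ?thesis by (simp only: diff_conv_add_uminus)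
qed

lemma tl_eq_id_tens_CompT: "typed C k c \<Longrightarrow> typed U c k \<Longrightarrow>
  tl_eq (Suc k) (Suc k) (single (CompT (TensT (IdT 1) U) (TensT (IdT 1) C)))
     (single (TensT (IdT 1) (CompT U C)) :: tm \<Rightarrow> 'k::field)"
proof -
  assume C: "typed C k c" and U: "typed U c k"
  have "tl_eq (Suc k) (Suc k) (single (CompT (TensT (IdT 1) U) (TensT (IdT 1) C)))
     (single (TensT (CompT (IdT 1) (IdT 1)) (CompT U C)) :: tm \<Rightarrow> 'k)"
    by (rule tl_eq_sym, rule tl_eq_interchange[where a=1 and b=1 and c=1]) (use C U in auto)
  also have "tl_eq (Suc k) (Suc k) \<dots> (single (TensT (IdT 1) (CompT U C)))"
    by (rule tl_eq_TensT_right, rule tl_eq_id_left) (use C U in auto)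
  finally show ?thesis .
qed

lemma tl_eq_cup_cap_tens_CompT: "typed C k c \<Longrightarrow> typed U c k \<Longrightarrow>
  tl_eq (Suc (Suc k)) (Suc (Suc k)) (single (CompT (TensT CupT U) (TensT CapT C)))
     (single (TensT (CompT CupT CapT) (CompT U C)) :: tm \<Rightarrow> 'k::field)"
  by (rule tl_eq_sym, rule tl_eq_interchange[where a=2 and b=0 and c=2]) auto

lemma jw_win_recursion: "tl_eq (Suc (Suc k)) (Suc (Suc k)) (jw_win i (Suc (Suc k)))
   (tens_lc (id_lc 1) (jw_win (Suc i) (Suc k)) - tens_lc e_lc (jw_win (Suc (Suc i)) k) :: tm \<Rightarrow> 'k::field)"
  unfolding jw_win_Suc_Suc unfolding jw_win_def tens_lc_sum_right tens_lc_scale_right tens_lc_single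
  by (intro tl_eq_diff tl_eq_sum[OF finite_apt_win] tl_eq_scale tl_eq_id_tens_CompT tl_eq_cup_cap_tens_CompT)
    (simp_all add: tm_type_capw_cupw)

section \<open>Idempotence\<close>

lemma jw_win_0_tl_eq: "tl_eq 0 0 (jw_win i 0) (id_lc 0 :: tm \<Rightarrow> 'k::field)"
  unfolding jw_win_0 by (rule tl_eq_id_left) simp

lemma jw_win_1_tl_eq: "tl_eq 1 1 (jw_win i (Suc 0)) (id_lc 1 :: tm \<Rightarrow> 'k::field)"
proof -
  have "tl_eq 1 1 (jw_win i (Suc 0)) (single (CompT (IdT 1) (IdT 1)) :: tm \<Rightarrow> 'k)"
    unfolding jw_win_1 by (rule tl_eq_CompT, rule tl_eq_unit_right, simp, rule tl_eq_unit_right) auto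
  also have "tl_eq 1 1 \<dots> (id_lc 1)"
    by (rule tl_eq_id_left) simp
  finally show ?thesis .
qed

lemma tl_eq_idem_transfer:
  assumes "tl_eq n n a b" "lc_hom n n a" "lc_hom n n b" "tl_eq n n (comp_lc b b) b"
  shows "tl_eq n n (comp_lc a a) (a :: tm \<Rightarrow> 'k::field)"
proof -
  have "tl_eq n n (comp_lc a a) (comp_lc b b)"
    by (rule tl_eq_comp[OF assms(1) assms(1,2,3)])
  also have "tl_eq n n \<dots> b" by (rule assms(4))
  also have "tl_eq n n \<dots> a" by (rule tl_eq_sym[OF assms(1)])
  finally show ?thesis .
qed

lemma tl_eq_tens_idem:
  assumes "lc_hom m m a" "lc_hom n n x"
    and "tl_eq m m (comp_lc a a) a" "tl_eq n n (comp_lc x x) (x :: tm \<Rightarrow> 'k::field)"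
  shows "tl_eq (m + n) (m + n) (comp_lc (tens_lc a x) (tens_lc a x)) (tens_lc a x)"
proof -
  have "tl_eq (m + n) (m + n) (comp_lc (tens_lc a x) (tens_lc a x)) (tens_lc (comp_lc a a) (comp_lc x x))"
    by (rule tl_eq_interchange_lc[OF assms(1,2,1,2)]) simp_all
  also have "tl_eq (m + n) (m + n) \<dots> (tens_lc a x)"
    by (rule tl_eq_tens[OF assms(3,4) lc_hom_comp[OF assms(1,1)] assms(2)]) simp_all
  finally show ?thesis .
qed

lemma tl_eq_idem_diff:
  assumes "tl_eq n n (comp_lc a a) a" "tl_eq n n (comp_lc a b) b"
    and "tl_eq n n (comp_lc b a) b" "tl_eq n n (comp_lc b b) (b :: tm \<Rightarrow> 'k::field)"
  shows "tl_eq n n (comp_lc (a - b) (a - b)) (a - b)"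
proof -
  have "tl_eq n n (comp_lc (a - b) (a - b)) (a - b - (b - b))"
    unfolding comp_lc_diff_left comp_lc_diff_right
    by (rule tl_eq_diff[OF tl_eq_diff[OF assms(1,3)] tl_eq_diff[OF assms(2,4)]])
  then show ?thesis by (simp only: diff_self diff_zero)
qed

lemma id_tens_jw_win_1_tl_eq: "tl_eq 2 2 (tens_lc (id_lc 1) (jw_win i (Suc 0))) (id_lc 2 :: tm \<Rightarrow> 'k::field)"
proof -
  have "tl_eq 2 2 (tens_lc (id_lc 1) (jw_win i (Suc 0))) (tens_lc (id_lc 1) (id_lc 1) :: tm \<Rightarrow> 'k)"
    by (rule tl_eq_tens_left[OF jw_win_1_tl_eq lc_hom_id_lc]) simp_all
  also have "tl_eq 2 2 \<dots> (id_lc 2)"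
    unfolding tens_lc_single by (rule tl_eq_id_tens_id) simp
  finally show ?thesis .
qed

lemma id_tens_jw_win_comp_e_tens_jw_win:
  fixes i k :: nat
  defines "B \<equiv> tens_lc e_lc (jw_win (Suc (Suc i)) k) :: tm \<Rightarrow> 'k::field"
  assumes idem: "tl_eq k k (comp_lc (jw_win (Suc (Suc i)) k) (jw_win (Suc (Suc i)) k)) (jw_win (Suc (Suc i)) k :: tm \<Rightarrow> 'k)"
  shows "tl_eq (Suc (Suc k)) (Suc (Suc k)) (comp_lc (tens_lc (id_lc 1) (jw_win (Suc i) (Suc k))) B) B"
proof (cases k)
  case 0
  have B: "lc_hom 2 2 B" unfolding B_def 0 by (rule lc_hom_tens[OF lc_hom_e_lc lc_hom_jw_win]) simp_all
  have "tl_eq 2 2 (comp_lc (tens_lc (id_lc 1) (jw_win (Suc i) (Suc 0))) B) (comp_lc (id_lc 2) B)"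
    by (rule tl_eq_comp_right[OF id_tens_jw_win_1_tl_eq B])
  also have "tl_eq 2 2 \<dots> B" by (rule tl_eq_id_left_lc[OF B])
  finally show ?thesis unfolding 0 numeral_2_eq_2 .
next
  case (Suc k')
  let ?K = "Suc (Suc k)" and ?Q = "jw_win (Suc (Suc i)) k" and ?Q' = "jw_win (Suc (Suc (Suc i))) k'"
  have B: "lc_hom ?K ?K B" unfolding B_def by (rule lc_hom_tens[OF lc_hom_e_lc lc_hom_jw_win]) simp_all
  have "tl_eq (Suc k) (Suc k) (jw_win (Suc i) (Suc k)) (tens_lc (id_lc 1) ?Q - tens_lc e_lc ?Q')"
    using jw_win_recursion[of k' "Suc i"] Suc by simp
  then have "tl_eq ?K ?K (comp_lc (tens_lc (id_lc 1) (jw_win (Suc i) (Suc k))) B)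
      (comp_lc (tens_lc (id_lc 1) (tens_lc (id_lc 1) ?Q)) B - comp_lc (tens_lc (id_lc 1) (tens_lc e_lc ?Q')) B)"
    unfolding tens_lc_diff_right[symmetric] comp_lc_diff_left[symmetric]
    by (rule tl_eq_comp_right[OF tl_eq_tens_left[OF _ lc_hom_id_lc] B]) simp_all
  also have "tl_eq ?K ?K \<dots> (tens_lc e_lc (comp_lc ?Q ?Q) - 0)"
    unfolding B_def
    by (rule tl_eq_diff[OF id_tens_id_tens_comp_e_tens tl_eq_zero_if_null[OF null_id_e_comp_e_lc[OF lc_hom_jw_win]]])
      (simp_all add: lc_hom_jw_win Suc)
  also have "tl_eq ?K ?K \<dots> (B - 0)"
    unfolding B_def by (rule tl_eq_diff[OF tl_eq_tens_left[OF idem lc_hom_e_lc] tl_eq_refl]) simp_all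
  finally show ?thesis by simp
qed

lemma e_tens_jw_win_comp_id_tens_jw_win:
  fixes i k :: nat
  defines "B \<equiv> tens_lc e_lc (jw_win (Suc (Suc i)) k) :: tm \<Rightarrow> 'k::field"
  assumes idem: "tl_eq k k (comp_lc (jw_win (Suc (Suc i)) k) (jw_win (Suc (Suc i)) k)) (jw_win (Suc (Suc i)) k :: tm \<Rightarrow> 'k)"
  shows "tl_eq (Suc (Suc k)) (Suc (Suc k)) (comp_lc B (tens_lc (id_lc 1) (jw_win (Suc i) (Suc k)))) B"
proof (cases k)
  case 0
  have B: "lc_hom 2 2 B" unfolding B_def 0 by (rule lc_hom_tens[OF lc_hom_e_lc lc_hom_jw_win]) simp_all
  have "tl_eq 2 2 (comp_lc B (tens_lc (id_lc 1) (jw_win (Suc i) (Suc 0)))) (comp_lc B (id_lc 2))"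
    by (rule tl_eq_comp_left[OF id_tens_jw_win_1_tl_eq B])
  also have "tl_eq 2 2 \<dots> B" by (rule tl_eq_id_right_lc[OF B])
  finally show ?thesis unfolding 0 numeral_2_eq_2 .
next
  case (Suc k')
  let ?K = "Suc (Suc k)" and ?Q = "jw_win (Suc (Suc i)) k" and ?Q' = "jw_win (Suc (Suc (Suc i))) k'"
  have B: "lc_hom ?K ?K B" unfolding B_def by (rule lc_hom_tens[OF lc_hom_e_lc lc_hom_jw_win]) simp_all
  have "tl_eq (Suc k) (Suc k) (jw_win (Suc i) (Suc k)) (tens_lc (id_lc 1) ?Q - tens_lc e_lc ?Q')"
    using jw_win_recursion[of k' "Suc i"] Suc by simp
  then have "tl_eq ?K ?K (comp_lc B (tens_lc (id_lc 1) (jw_win (Suc i) (Suc k))))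
      (comp_lc B (tens_lc (id_lc 1) (tens_lc (id_lc 1) ?Q)) - comp_lc B (tens_lc (id_lc 1) (tens_lc e_lc ?Q')))"
    unfolding tens_lc_diff_right[symmetric] comp_lc_diff_right[symmetric]
    by (rule tl_eq_comp_left[OF tl_eq_tens_left[OF _ lc_hom_id_lc] B]) simp_all
  also have "tl_eq ?K ?K \<dots> (tens_lc e_lc (comp_lc ?Q ?Q) - 0)"
    unfolding B_def
    by (rule tl_eq_diff[OF e_tens_comp_id_tens_id_tens tl_eq_zero_if_null[OF null_e_comp_id_e_lc[OF lc_hom_jw_win]]])
      (simp_all add: lc_hom_jw_win Suc)
  also have "tl_eq ?K ?K \<dots> (B - 0)"
    unfolding B_def by (rule tl_eq_diff[OF tl_eq_tens_left[OF idem lc_hom_e_lc] tl_eq_refl]) simp_all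
  finally show ?thesis by simp
qed

lemma jw_win_idem: "tl_eq k k (comp_lc (jw_win i k) (jw_win i k)) (jw_win i k :: tm \<Rightarrow> 'k::field)"
proof (induction k arbitrary: i rule: nat_less_induct)
  case (1 k)
  consider "k = 0" | "k = Suc 0" | k' where "k = Suc (Suc k')"
    by (metis not0_implies_Suc)
  then show ?case
  proof cases
    case 1
    then show ?thesis
      using tl_eq_idem_transfer[OF jw_win_0_tl_eq lc_hom_jw_win lc_hom_id_lc id_lc_comp_id_lc] by simp
  next
    case 2
    then show ?thesis
      using tl_eq_idem_transfer[OF jw_win_1_tl_eq _ lc_hom_id_lc id_lc_comp_id_lc] lc_hom_jw_win[of "Suc 0" i]
      by (simp add: One_nat_def)
  next
    case (3 k')
    let ?A = "tens_lc (id_lc 1) (jw_win (Suc i) (Suc k')) :: tm \<Rightarrow> 'k"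
      and ?B = "tens_lc e_lc (jw_win (Suc (Suc i)) k') :: tm \<Rightarrow> 'k"
    have idem_Suc: "tl_eq (Suc k') (Suc k') (comp_lc (jw_win (Suc i) (Suc k')) (jw_win (Suc i) (Suc k')))
        (jw_win (Suc i) (Suc k') :: tm \<Rightarrow> 'k)"
      and idem: "tl_eq k' k' (comp_lc (jw_win (Suc (Suc i)) k') (jw_win (Suc (Suc i)) k'))
        (jw_win (Suc (Suc i)) k' :: tm \<Rightarrow> 'k)"
      using 1 3 by simp_all
    have A: "lc_hom (Suc (Suc k')) (Suc (Suc k')) ?A"
      and B: "lc_hom (Suc (Suc k')) (Suc (Suc k')) ?B"
      by (rule lc_hom_tens[OF lc_hom_id_lc lc_hom_jw_win] lc_hom_tens[OF lc_hom_e_lc lc_hom_jw_win]; simp)+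
    have "tl_eq (Suc (Suc k')) (Suc (Suc k')) (comp_lc ?A ?A) ?A"
      using tl_eq_tens_idem[OF lc_hom_id_lc[of 1] lc_hom_jw_win id_lc_comp_id_lc idem_Suc] by simp
    moreover have "tl_eq (Suc (Suc k')) (Suc (Suc k')) (comp_lc ?B ?B) ?B"
      using tl_eq_tens_idem[OF lc_hom_e_lc lc_hom_jw_win e_lc_comp_e_lc idem] by simp
    ultimately have "tl_eq (Suc (Suc k')) (Suc (Suc k')) (comp_lc (?A - ?B) (?A - ?B)) (?A - ?B)"
      using tl_eq_idem_diff id_tens_jw_win_comp_e_tens_jw_win[OF idem]
        e_tens_jw_win_comp_id_tens_jw_win[OF idem] by blast
    then show ?thesis
      unfolding 3 by (rule tl_eq_idem_transfer[OF jw_win_recursion lc_hom_jw_win lc_hom_diff[OF A B]])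
  qed
qed

lemma apt_iff_mem_apt_win: "apt n I \<longleftrightarrow> I \<in> apt_win 1 n"
proof
  assume "apt n I"
  then show "I \<in> apt_win 1 n"
    unfolding apt_def apt_win_def by (auto simp: subset_iff le_less)
next
  assume "I \<in> apt_win 1 n"
  then have I: "I \<subseteq> {1..<n}" "\<forall>j\<in>I. Suc j \<notin> I"
    by (auto simp: apt_win_def)
  have "i - 1 \<notin> I" if i: "i \<in> I" for i
  proof
    assume "i - 1 \<in> I"
    moreover have "Suc (i - 1) = i" using I i by auto
    ultimately show False using I i by metis
  qed
  with I show "apt n I"
    unfolding apt_def by auto
qed

lemma jw_eq_jw_win: "jw n = jw_win 1 n"
  unfolding jw_def jw_win_def cap_I_def cup_I_def apt_iff_mem_apt_win Collect_mem_eq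
  by (simp add: sum_apply fun_eq_iff)

theorem mainTheorem5:
  fixes n :: nat
  shows "tl_eq n n (comp_lc (jw n) (jw n)) (jw n :: tm \<Rightarrow> 'k::field)"
  unfolding jw_eq_jw_win by (rule jw_win_idem)

end
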